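(* For every non-negative integer $k$ and every proper $4$-coloring $\varphi$ of $G_k$, we have $\varphi(v_{(k,1)})=\varphi(v_{(0,1)})$ and $\varphi(v_{(k,2)})=\varphi(v_{(0,2)})$.
   Context: The planar graphs $G_k$ are defined inductively. $G_0$ has vertex set $\{v_{(0,1)},v_{(0,2)}\}$ and the single edge $\{v_{(0,1)},v_{(0,2)}\}$. For $i\ge 1$, $G_i$ is obtained from $G_{i-1}$ by adding, for each $j\in\{1,2\}$, four new vertices $a_{(i,j)},b_{(i,j)},c_{(i,j)},v_{(i,j)}$ and the edges $\{a_{(i,j)},b_{(i,j)}\},\{b_{(i,j)},c_{(i,j)}\},\{c_{(i,j)},a_{(i,j)}\}$, $\{a_{(i,j)},v_{(i,j)}\},\{b_{(i,j)},v_{(i,j)}\},\{c_{(i,j)},v_{(i,j)}\}$, $\{a_{(i,j)},v_{(i-1,j)}\},\{b_{(i,j)},v_{(i-1,j)}\},\{c_{(i,j)},v_{(i-1,j)}\}$. A proper $4$-coloring is a map $V(G_k)\to\{1,2,3,4\}$ giving adjacent vertices different colors. *)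

theory Defs
  imports Main
begin

text \<open>Vertices of the graphs G_k: A i j, B i j, C i j stand for a_(i,j), b_(i,j), c_(i,j)
  and V i j for v_(i,j).  Index j ranges over {1,2}.\<close>
datatype vert = A nat nat | B nat nat | C nat nat | V nat nat

fun verts :: "nat \<Rightarrow> vert set" where
  "verts 0 = {V 0 1, V 0 2}"
| "verts (Suc i) = verts i \<union>
     (\<Union>j\<in>{1,2}. {A (Suc i) j, B (Suc i) j, C (Suc i) j, V (Suc i) j})"

fun edges :: "nat \<Rightarrow> vert set set" where
  "edges 0 = {{V 0 1, V 0 2}}"
| "edges (Suc i) = edges i \<union>
     (\<Union>j\<in>{1,2}.
       {{A (Suc i) j, B (Suc i) j}, {B (Suc i) j, C (Suc i) j}, {C (Suc i) j, A (Suc i) j},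
        {A (Suc i) j, V (Suc i) j}, {B (Suc i) j, V (Suc i) j}, {C (Suc i) j, V (Suc i) j},
        {A (Suc i) j, V i j}, {B (Suc i) j, V i j}, {C (Suc i) j, V i j}})"

text \<open>A proper 4-coloring of G_k: a map V(G_k) \<rightarrow> {1,2,3,4} (values outside V(G_k) irrelevant)
  with adjacent vertices receiving different colors.\<close>
definition proper_4_coloring :: "nat \<Rightarrow> (vert \<Rightarrow> nat) \<Rightarrow> bool" where
  "proper_4_coloring k \<phi> \<longleftrightarrow>
     (\<forall>x\<in>verts k. \<phi> x \<in> {1,2,3,4}) \<and>
     (\<forall>x y. {x, y} \<in> edges k \<longrightarrow> \<phi> x \<noteq> \<phi> y)"

end

theory Submission
  imports Defs
begin

text \<open>In each gadget the vertices a, b, c form a triangle, and both v_(i-1,j) and v_(i,j) are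
  adjacent to all three of them. A proper 4-coloring spends three colors on the triangle, so
  both v-vertices receive the one color left over; the claim follows along the chain by
  induction on k.\<close>

lemma eq_if_card_le_Suc_card:
  assumes "finite S" "T \<subseteq> S" "card S \<le> Suc (card T)" "v \<in> S - T" "w \<in> S - T"
  shows "v = w"
proof -
  have "card (S - T) \<le> Suc 0"
    using assms(1-3) by (simp add: card_Diff_subset finite_subset)
  then show ?thesis
    using assms(1,4,5) by (simp add: card_le_Suc0_iff_eq)
qed

lemma edges_mono: "i \<le> k \<Longrightarrow> edges i \<subseteq> edges k"
  by (rule lift_Suc_mono_le[of edges]) (simp_all only: edges.simps Un_upper1)

lemma verts_mono: "i \<le> k \<Longrightarrow> verts i \<subseteq> verts k"
  by (rule lift_Suc_mono_le[of verts]) (simp_all only: verts.simps Un_upper1)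

lemma proper_4_coloring_mono:
  "proper_4_coloring k \<phi> \<Longrightarrow> i \<le> k \<Longrightarrow> proper_4_coloring i \<phi>"
  unfolding proper_4_coloring_def by (meson edges_mono verts_mono subsetD)

lemma V_in_verts: "j \<in> {1, 2} \<Longrightarrow> V i j \<in> verts i"
  by (cases i) auto

lemma gadget_edges:
  assumes "j \<in> {1, 2}"
  shows "{{A (Suc i) j, B (Suc i) j}, {B (Suc i) j, C (Suc i) j}, {C (Suc i) j, A (Suc i) j},
     {A (Suc i) j, V (Suc i) j}, {B (Suc i) j, V (Suc i) j}, {C (Suc i) j, V (Suc i) j},
     {A (Suc i) j, V i j}, {B (Suc i) j, V i j}, {C (Suc i) j, V i j}} \<subseteq> edges (Suc i)"
  unfolding edges.simps by (rule subset_trans[OF UN_upper[OF assms] Un_upper2])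

lemma proper_4_coloring_V_Suc:
  assumes col: "proper_4_coloring (Suc i) \<phi>" and j: "j \<in> {1, 2}"
  shows "\<phi> (V (Suc i) j) = \<phi> (V i j)"
proof -
  let ?a = "\<phi> (A (Suc i) j)" and ?b = "\<phi> (B (Suc i) j)" and ?c = "\<phi> (C (Suc i) j)"
  have "{A (Suc i) j, B (Suc i) j, C (Suc i) j, V (Suc i) j, V i j} \<subseteq> verts (Suc i)"
    using j V_in_verts[OF j, of i] verts_mono[of i "Suc i"] by auto
  then have colors: "{?a, ?b, ?c, \<phi> (V (Suc i) j), \<phi> (V i j)} \<subseteq> {1, 2, 3, 4}"
    using col unfolding proper_4_coloring_def by blast
  have adj: "\<phi> x \<noteq> \<phi> y" if "{x, y} \<in> edges (Suc i)" for x y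
    using col that unfolding proper_4_coloring_def by blast
  have "?a \<noteq> ?b" "?b \<noteq> ?c" "?c \<noteq> ?a"
    "?a \<noteq> \<phi> (V (Suc i) j)" "?b \<noteq> \<phi> (V (Suc i) j)" "?c \<noteq> \<phi> (V (Suc i) j)"
    "?a \<noteq> \<phi> (V i j)" "?b \<noteq> \<phi> (V i j)" "?c \<noteq> \<phi> (V i j)"
    using gadget_edges[OF j] by (simp_all add: adj)
  then have "card {?a, ?b, ?c} = 3"
    and "\<phi> (V (Suc i) j) \<notin> {?a, ?b, ?c}" "\<phi> (V i j) \<notin> {?a, ?b, ?c}"
    by simp_all
  with colors show ?thesis
    by (intro eq_if_card_le_Suc_card[of "{1, 2, 3, 4}" "{?a, ?b, ?c}"]) auto
qed

theorem lemma6p1: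
  fixes k :: nat and \<phi> :: "vert \<Rightarrow> nat"
  assumes "proper_4_coloring k \<phi>"
  shows "\<phi> (V k 1) = \<phi> (V 0 1) \<and> \<phi> (V k 2) = \<phi> (V 0 2)"
  using assms
proof (induction k)
  case (Suc k)
  then have "proper_4_coloring k \<phi>" by (simp add: proper_4_coloring_mono)
  with Suc show ?case by (simp add: proper_4_coloring_V_Suc)
qed simp

end
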